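(* Let $G=(V,E)$ be a connected graph with $n=|V|\ge 2$, edge weights $w$ and edge costs $c$. Let $F\subseteq E$ be such that $G\setminus F$ is connected, with cost $B=c(F)$ and profit $\Delta=p_G(F)$. Then there exist an integer $t\le n$ and partial cuts $C_1,\dots,C_{t-1}$ in $G$ (each of the form $C_G(S_i,W_i)$) such that $\sum_{i=1}^{t-1}c(C_i)\le 2B\log n$ and $\sum_{i=1}^{t-1}p_G(C_i)\ge\Delta$.
   Context: $G=(V,E)$ is a finite undirected graph (parallel edges allowed) with edge weights $w:E\to\mathbb{R}_{\ge0}$ and removal costs $c:E\to\mathbb{R}_{>0}$; $c(F)=\sum_{f\in F}c(f)$; $G\setminus F=(V,E\setminus F)$. $\mathrm{MST}(H)$ is the weight of a minimum spanning tree of $H$ w.r.t. $w$, with $\mathrm{MST}(H)=\infty$ if $H$ is disconnected. The profit is $p_G(F)=\mathrm{MST}(G\setminus F)-\mathrm{MST}(G)$. For $\emptyset\ne S\subsetneq V$, the complete cut is $C_G(S)=\{e\in E:|e\cap S|=1\}$ and, for $W\in\mathbb{R}$, the partial cut is $C_G(S,W)=\{e\in C_G(S):w(e)<W\}$. $\log$ denotes $\log_2$. *)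

theory Defs
  imports "HOL-Library.Extended_Real"
begin

text \<open>A finite undirected multigraph: vertex set V, edge set E (edges are abstract
  objects, so parallel edges are allowed), and an endpoint map ends.\<close>

definition graph :: "'v set \<Rightarrow> 'e set \<Rightarrow> ('e \<Rightarrow> 'v set) \<Rightarrow> bool" where
  "graph V E ends \<longleftrightarrow> finite V \<and> finite E \<and> (\<forall>e\<in>E. ends e \<subseteq> V \<and> card (ends e) = 2)"

definition adj :: "('e \<Rightarrow> 'v set) \<Rightarrow> 'e set \<Rightarrow> ('v \<times> 'v) set" where
  "adj ends T = {(u, v). \<exists>e\<in>T. ends e = {u, v}}"

definition connected_graph :: "'v set \<Rightarrow> ('e \<Rightarrow> 'v set) \<Rightarrow> 'e set \<Rightarrow> bool" where
  "connected_graph V ends T \<longleftrightarrow> (\<forall>u\<in>V. \<forall>v\<in>V. (u, v) \<in> (adj ends T)\<^sup>*)"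

definition spanning_tree :: "'v set \<Rightarrow> ('e \<Rightarrow> 'v set) \<Rightarrow> 'e set \<Rightarrow> 'e set \<Rightarrow> bool" where
  "spanning_tree V ends H T \<longleftrightarrow> T \<subseteq> H \<and> connected_graph V ends T
      \<and> (\<forall>e\<in>T. \<not> connected_graph V ends (T - {e}))"

text \<open>MST weight; Inf of the empty set is \<infinity>, i.e. disconnected graphs get \<infinity>.\<close>
definition MST :: "'v set \<Rightarrow> ('e \<Rightarrow> 'v set) \<Rightarrow> ('e \<Rightarrow> real) \<Rightarrow> 'e set \<Rightarrow> ereal" where
  "MST V ends w H = (INF T \<in> {T. spanning_tree V ends H T}. ereal (sum w T))"

definition profit :: "'v set \<Rightarrow> 'e set \<Rightarrow> ('e \<Rightarrow> 'v set) \<Rightarrow> ('e \<Rightarrow> real) \<Rightarrow> 'e set \<Rightarrow> ereal" where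
  "profit V E ends w F = MST V ends w (E - F) - MST V ends w E"

definition cost :: "('e \<Rightarrow> real) \<Rightarrow> 'e set \<Rightarrow> real" where
  "cost c F = sum c F"

definition complete_cut :: "'e set \<Rightarrow> ('e \<Rightarrow> 'v set) \<Rightarrow> 'v set \<Rightarrow> 'e set" where
  "complete_cut E ends S = {e \<in> E. card (ends e \<inter> S) = 1}"

definition partial_cut :: "'e set \<Rightarrow> ('e \<Rightarrow> 'v set) \<Rightarrow> ('e \<Rightarrow> real) \<Rightarrow> 'v set \<Rightarrow> real \<Rightarrow> 'e set" where
  "partial_cut E ends w S W = {e \<in> complete_cut E ends S. w e < W}"

end

theory Submission
  imports Defs
begin

text \<open>
  For a connected edge set \<open>H\<close>, Kruskal's algorithm shows that the MST weight is the integral,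
  over all thresholds \<open>W\<close>, of the number of components of the edges of \<open>H\<close> lighter than \<open>W\<close>,
  minus one. Follow the components of the edges of \<open>G - F\<close> lighter than \<open>W\<close> as \<open>W\<close> runs
  through the weights; whenever components merge, all but a largest one of them are light.
  There are \<open>n - 1\<close> light components. The partial cut of a light component at its level
  consists of edges of \<open>F\<close>, and every vertex lies in at most \<open>log n\<close> light components, since its
  light component doubles in size each time; hence the cuts cost at most \<open>2 B log n\<close>. Below a
  threshold, a component of \<open>G\<close> containing \<open>k\<close> components of \<open>G - F\<close> is split by at least
  \<open>k - 1\<close> light components of higher level, and removing the cut of each of them separates it;
  integrating over the thresholds bounds the profit of \<open>F\<close> by the total profit of the cuts.
\<close>

lemma card_image_le_if_factors:
  assumes "finite A" and "\<And>u v. u \<in> A \<Longrightarrow> v \<in> A \<Longrightarrow> g u = g v \<Longrightarrow> f u = f v"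
  shows "card (f ` A) \<le> card (g ` A)"
proof -
  have "f ` A = (\<lambda>y. f (inv_into A g y)) ` g ` A"
    unfolding image_image
  proof (rule image_cong)
    fix x assume x: "x \<in> A"
    have "inv_into A g (g x) \<in> A" "g (inv_into A g (g x)) = g x"
      using x by (auto intro: inv_into_into f_inv_into_f)
    then show "f x = f (inv_into A g (g x))"
      using assms(2) x by metis
  qed simp
  then show ?thesis
    using assms(1) by (metis card_image_le finite_imageI)
qed

lemma card_filter_add_card_le:
  assumes "finite A'" "A \<subseteq> A'"
  shows "card {x\<in>A'. P x} + card A \<le> card {x\<in>A. P x} + card A'"
proof -
  have "card {x\<in>A'. P x} \<le> card ({x\<in>A. P x} \<union> (A' - A))"
    using assms finite_subset[OF assms(2,1)] by (intro card_mono) auto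
  also have "\<dots> \<le> card {x\<in>A. P x} + card (A' - A)"
    by (rule card_Un_le)
  finally show ?thesis
    using card_Diff_subset[OF finite_subset[OF assms(2,1)] assms(2)] card_mono[OF assms] by linarith
qed

definition splits :: "'v set \<Rightarrow> 'v set \<Rightarrow> bool" where
  "splits X Y \<longleftrightarrow> Y \<inter> X \<noteq> {} \<and> Y - X \<noteq> {}"

lemma card_refine_partition:
  assumes "finite \<P>" "\<And>Y. Y \<in> \<P> \<Longrightarrow> Y \<noteq> {}"
    and "\<And>Y Y'. Y \<in> \<P> \<Longrightarrow> Y' \<in> \<P> \<Longrightarrow> Y \<noteq> Y' \<Longrightarrow> Y \<inter> Y' = {}"
  shows "card ((\<lambda>Y. Y \<inter> X) ` {Y\<in>\<P>. Y \<inter> X \<noteq> {}} \<union> (\<lambda>Y. Y - X) ` {Y\<in>\<P>. Y - X \<noteq> {}})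
    = card \<P> + card {Y\<in>\<P>. splits X Y}"
proof -
  let ?I = "{Y\<in>\<P>. Y \<inter> X \<noteq> {}}" and ?O = "{Y\<in>\<P>. Y - X \<noteq> {}}"
  have fin: "finite ?I" "finite ?O"
    using assms(1) by simp_all
  have same: "Y = Y'" if "Y \<in> \<P>" "Y' \<in> \<P>" "x \<in> Y" "x \<in> Y'" for x Y Y'
    using assms(3)[OF that(1,2)] that(3,4) by blast
  have "inj_on (\<lambda>Y. Y \<inter> X) ?I"
  proof (rule inj_onI)
    fix Y Y' assume Y: "Y \<in> ?I" "Y' \<in> ?I" "Y \<inter> X = Y' \<inter> X"
    then obtain x where "x \<in> Y" "x \<in> Y'" by blast
    with Y show "Y = Y'" using same by blast
  qed
  moreover have "inj_on (\<lambda>Y. Y - X) ?O"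
  proof (rule inj_onI)
    fix Y Y' assume Y: "Y \<in> ?O" "Y' \<in> ?O" "Y - X = Y' - X"
    then obtain x where "x \<in> Y" "x \<in> Y'" by blast
    with Y show "Y = Y'" using same by blast
  qed
  moreover have "(\<lambda>Y. Y \<inter> X) ` ?I \<inter> (\<lambda>Y. Y - X) ` ?O = {}"
    by blast
  ultimately have "card ((\<lambda>Y. Y \<inter> X) ` ?I \<union> (\<lambda>Y. Y - X) ` ?O) = card ?I + card ?O"
    using fin by (simp add: card_Un_disjoint card_image)
  also have "\<dots> = card (?I \<union> ?O) + card (?I \<inter> ?O)"
    using card_Un_Int[OF fin] .
  also have "?I \<union> ?O = \<P>"
    using assms(2) by blast
  also have "?I \<inter> ?O = {Y\<in>\<P>. splits X Y}"
    unfolding splits_def by blast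
  finally show ?thesis .
qed

lemma sum_card_swap:
  assumes "finite A" "finite B"
  shows "(\<Sum>x\<in>A. card {y\<in>B. R x y}) = (\<Sum>y\<in>B. card {x\<in>A. R x y})"
  using sum.swap_restrict[OF assms, of "\<lambda>_ _. 1::nat" R] by simp

section \<open>Connected components of edge sets\<close>

locale multigraph =
  fixes V :: "'v set" and E :: "'e set" and ends :: "'e \<Rightarrow> 'v set"
  assumes graph: "graph V E ends"
begin

definition component :: "'e set \<Rightarrow> 'v \<Rightarrow> 'v set" where
  "component A v = {u\<in>V. (v, u) \<in> (adj ends A)\<^sup>*}"

definition components :: "'e set \<Rightarrow> 'v set set" where
  "components A = component A ` V"

definition num_components :: "'e set \<Rightarrow> nat" where
  "num_components A = card (components A)"

lemma finite_V: "finite V" and finite_E: "finite E"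
  using graph unfolding graph_def by auto

lemma edge_ends: "e \<in> E \<Longrightarrow> \<exists>a b. ends e = {a, b} \<and> a \<noteq> b \<and> a \<in> V \<and> b \<in> V"
  using graph unfolding graph_def by (metis card_2_iff insert_subset)

lemma ends_in_V: "e \<in> E \<Longrightarrow> ends e \<subseteq> V"
  using graph unfolding graph_def by blast

lemma sym_adj: "sym (adj ends A)"
  unfolding adj_def by (auto intro: symI simp: insert_commute)

lemma reach_sym: "(u, v) \<in> (adj ends A)\<^sup>* \<Longrightarrow> (v, u) \<in> (adj ends A)\<^sup>*"
  using sym_rtrancl[OF sym_adj] by (rule symD)

lemma adj_mono: "A \<subseteq> B \<Longrightarrow> adj ends A \<subseteq> adj ends B"
  unfolding adj_def by auto

lemma adj_in_V: "A \<subseteq> E \<Longrightarrow> (u, v) \<in> adj ends A \<Longrightarrow> u \<in> V \<and> v \<in> V"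
  using graph unfolding adj_def graph_def by blast

lemma component_self: "v \<in> V \<Longrightarrow> v \<in> component A v"
  unfolding component_def by auto

lemma component_subset: "component A v \<subseteq> V"
  unfolding component_def by auto

lemma finite_component: "finite (component A v)"
  using finite_subset[OF component_subset finite_V] .

lemma component_eq:
  assumes "u \<in> component A v"
  shows "component A u = component A v"
proof -
  have "(v, u) \<in> (adj ends A)\<^sup>*"
    using assms unfolding component_def by simp
  then show ?thesis
    unfolding component_def by (blast intro: rtrancl_trans reach_sym)
qed

lemma component_mono: "A \<subseteq> B \<Longrightarrow> component A v \<subseteq> component B v"
  unfolding component_def using rtrancl_mono[OF adj_mono] by blast

lemma component_in_components: "v \<in> V \<Longrightarrow> component A v \<in> components A"
  unfolding components_def by blast

lemma finite_components: "finite (components A)"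
  unfolding components_def using finite_V by simp

lemma components_nonempty: "K \<in> components A \<Longrightarrow> K \<noteq> {}"
  unfolding components_def using component_self by blast

lemma components_subset: "K \<in> components A \<Longrightarrow> K \<subseteq> V"
  unfolding components_def using component_subset by blast

lemma components_eq_component: "K \<in> components A \<Longrightarrow> v \<in> K \<Longrightarrow> K = component A v"
  unfolding components_def using component_eq by blast

lemma components_disjoint:
  "K \<in> components A \<Longrightarrow> K' \<in> components A \<Longrightarrow> K \<noteq> K' \<Longrightarrow> K \<inter> K' = {}"
  by (metis components_eq_component disjoint_iff)

lemma num_components_cong:
  "(\<And>v. v \<in> V \<Longrightarrow> component A v = component B v) \<Longrightarrow> num_components A = num_components B"
  unfolding num_components_def components_def by (simp cong: image_cong)

lemma num_components_antimono:
  assumes "A \<subseteq> B"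
  shows "num_components B \<le> num_components A"
  unfolding num_components_def components_def
proof (rule card_image_le_if_factors[OF finite_V])
  fix u v assume "u \<in> V" "v \<in> V" "component A u = component A v"
  then show "component B u = component B v"
    using component_mono[OF assms] component_self component_eq by (metis subsetD)
qed

lemma connected_graph_iff: "connected_graph V ends A \<longleftrightarrow> (\<forall>v\<in>V. component A v = V)"
  unfolding connected_graph_def component_def by auto

lemma components_connected: "connected_graph V ends A \<Longrightarrow> V \<noteq> {} \<Longrightarrow> components A = {V}"
  unfolding components_def connected_graph_iff by auto

lemma num_components_connected: "connected_graph V ends A \<Longrightarrow> V \<noteq> {} \<Longrightarrow> num_components A = 1"
  unfolding num_components_def by (simp add: components_connected)

lemma num_components_empty: "num_components {} = card V"
proof -
  have "component {} v = {v}" if "v \<in> V" for v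
    using that unfolding component_def adj_def by auto
  then have "components {} = (\<lambda>v. {v}) ` V"
    unfolding components_def by auto
  then show ?thesis
    unfolding num_components_def by (simp add: card_image)
qed

lemma component_subset_closed:
  assumes "x \<in> S" and "\<And>y z. y \<in> S \<Longrightarrow> (y, z) \<in> adj ends A \<Longrightarrow> z \<in> S"
  shows "component A x \<subseteq> S"
proof
  fix z assume "z \<in> component A x"
  then have "(x, z) \<in> (adj ends A)\<^sup>*"
    unfolding component_def by simp
  then show "z \<in> S"
    by (induction rule: rtrancl_induct) (use assms in blast)+
qed

lemma adj_insert: "ends e = {a, b} \<Longrightarrow> adj ends (insert e A) = {(a, b), (b, a)} \<union> adj ends A"
  unfolding adj_def by (auto simp: doubleton_eq_iff)

lemma component_eq_if_adj:
  assumes "A \<subseteq> E" "(y, z) \<in> adj ends A"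
  shows "component A z = component A y"
proof -
  have "z \<in> component A y"
    using adj_in_V[OF assms] assms(2) unfolding component_def by auto
  then show ?thesis
    by (rule component_eq)
qed

lemma component_insert_outside:
  assumes "A \<subseteq> E" "ends e = {a, b}" "x \<in> V" "x \<notin> component A a \<union> component A b"
  shows "component (insert e A) x = component A x"
proof
  show "component (insert e A) x \<subseteq> component A x"
  proof (rule component_subset_closed)
    fix y z assume y: "y \<in> component A x" and yz: "(y, z) \<in> adj ends (insert e A)"
    have "component A y = component A x"
      using y by (rule component_eq)
    then have "y \<notin> {a, b}"
      using assms(4) component_self[OF assms(3)] by auto
    then have "(y, z) \<in> adj ends A"
      using yz adj_insert[OF assms(2)] by auto
    then show "z \<in> component A x"
      using component_eq_if_adj[OF assms(1)] adj_in_V[OF assms(1)] component_self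
        component_eq[OF y] by metis
  qed (rule component_self[OF assms(3)])
qed (rule component_mono, blast)

lemma component_insert_inside:
  assumes "A \<subseteq> E" "e \<in> E" "ends e = {a, b}" "x \<in> component A a \<union> component A b"
  shows "component (insert e A) x = component A a \<union> component A b"
proof
  have ab: "a \<in> V" "b \<in> V"
    using ends_in_V[OF assms(2)] assms(3) by auto
  show "component (insert e A) x \<subseteq> component A a \<union> component A b"
  proof (rule component_subset_closed[OF assms(4)])
    fix y z assume y: "y \<in> component A a \<union> component A b"
      and yz: "(y, z) \<in> adj ends (insert e A)"
    show "z \<in> component A a \<union> component A b"
    proof (cases "(y, z) \<in> adj ends A")
      case True
      then have "z \<in> component A y"
        using component_eq_if_adj[OF assms(1)] adj_in_V[OF assms(1)] component_self by metis
      then show ?thesis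
        using y component_eq by auto
    next
      case False
      then have "z \<in> {a, b}"
        using yz adj_insert[OF assms(3)] by auto
      then show ?thesis
        using ab component_self by auto
    qed
  qed
  have mono: "component A c \<subseteq> component (insert e A) c" for c
    by (rule component_mono) blast
  have "b \<in> component (insert e A) a"
    using ab(2) adj_insert[OF assms(3)] unfolding component_def by auto
  then have "component (insert e A) b = component (insert e A) a"
    by (rule component_eq)
  then have sub: "component A a \<union> component A b \<subseteq> component (insert e A) a"
    using mono[of a] mono[of b] by auto
  then have "component (insert e A) x = component (insert e A) a"
    using assms(4) by (intro component_eq) blast
  then show "component A a \<union> component A b \<subseteq> component (insert e A) x"
    using sub by simp
qed

lemma components_insert:
  assumes "A \<subseteq> E" "e \<in> E" "ends e = {a, b}"
  shows "components (insert e A)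
    = insert (component A a \<union> component A b) (components A - {component A a, component A b})"
  (is "_ = insert ?C (?K - {?Ca, ?Cb})")
proof (rule equalityI)
  have "component (insert e A) x \<in> insert ?C (?K - {?Ca, ?Cb})" if x: "x \<in> V" for x
  proof (cases "x \<in> ?C")
    case False
    then have "component A x \<noteq> ?Ca" "component A x \<noteq> ?Cb"
      using component_self[OF x] by auto
    then show ?thesis
      using component_insert_outside[OF assms(1,3) x False] component_in_components[OF x] by simp
  qed (simp add: component_insert_inside[OF assms])
  then show "components (insert e A) \<subseteq> insert ?C (?K - {?Ca, ?Cb})"
    unfolding components_def[of "insert e A"] by blast
  have a: "a \<in> V"
    using ends_in_V[OF assms(2)] assms(3) by auto
  then have "?C \<in> components (insert e A)"
    using component_insert_inside[OF assms, of a] component_self[OF a]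
      component_in_components[OF a, of "insert e A"] by simp
  moreover have "K \<in> components (insert e A)" if K: "K \<in> ?K - {?Ca, ?Cb}" for K
  proof -
    obtain x where x: "x \<in> V" "K = component A x"
      using K unfolding components_def by blast
    then have "x \<notin> ?C"
      using K component_eq by blast
    then show ?thesis
      using component_insert_outside[OF assms(1,3) x(1)] component_in_components[OF x(1)] x(2)
      by metis
  qed
  ultimately show "insert ?C (?K - {?Ca, ?Cb}) \<subseteq> components (insert e A)"
    by blast
qed

lemma num_components_insert:
  assumes "A \<subseteq> E" "e \<in> E" "ends e = {a, b}"
  shows "num_components (insert e A) + card {component A a, component A b} = num_components A + 1"
proof -
  let ?Ca = "component A a" and ?Cb = "component A b"
  have ab: "a \<in> V" "b \<in> V"
    using ends_in_V[OF assms(2)] assms(3) by auto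
  have sub: "{?Ca, ?Cb} \<subseteq> components A"
    using ab component_in_components by simp
  have "?Ca \<union> ?Cb \<notin> components A - {?Ca, ?Cb}"
    using components_disjoint[of "?Ca \<union> ?Cb" A ?Ca] sub component_self[OF ab(1)] by blast
  then have "num_components (insert e A) = card (components A - {?Ca, ?Cb}) + 1"
    unfolding num_components_def components_insert[OF assms] using finite_components by simp
  also have "card (components A - {?Ca, ?Cb}) = num_components A - card {?Ca, ?Cb}"
    unfolding num_components_def using card_Diff_subset[OF _ sub] by simp
  finally show ?thesis
    using card_mono[OF finite_components sub] unfolding num_components_def by linarith
qed

lemma num_components_le_union:
  assumes "finite D" "A \<subseteq> E" "D \<subseteq> E"
  shows "num_components A \<le> num_components (A \<union> D) + card D"
  using assms
proof (induction D rule: finite_induct)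
  case (insert e D)
  obtain a b where ab: "ends e = {a, b}"
    using edge_ends insert.prems(2) by blast
  have "card {component (A \<union> D) a, component (A \<union> D) b} \<le> 2"
    by (cases "component (A \<union> D) a = component (A \<union> D) b") simp_all
  then have "num_components (A \<union> D) \<le> num_components (insert e (A \<union> D)) + 1"
    using num_components_insert[of "A \<union> D" e a b] insert ab by auto
  then show ?case
    using insert by simp
qed simp

lemma component_eq_if_no_crossing:
  assumes "A \<subseteq> B" "B \<subseteq> E" "v \<in> V"
    and no_crossing: "\<And>e a b. e \<in> B - A \<Longrightarrow> ends e = {a, b} \<Longrightarrow> component A a = component A b"
  shows "component B v = component A v"
proof
  show "component B v \<subseteq> component A v"
  proof (rule component_subset_closed)
    fix y z assume y: "y \<in> component A v" and yz: "(y, z) \<in> adj ends B"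
    then obtain e where e: "e \<in> B" "ends e = {y, z}"
      unfolding adj_def by auto
    have z: "z \<in> V"
      using adj_in_V[OF assms(2) yz] by simp
    have "component A z = component A y"
    proof (cases "e \<in> A")
      case True
      then have "(y, z) \<in> adj ends A"
        using e unfolding adj_def by auto
      then show ?thesis
        using component_eq_if_adj[OF order_trans[OF assms(1,2)]] by simp
    next
      case False
      then show ?thesis
        using no_crossing e by auto
    qed
    then show "z \<in> component A v"
      using component_self[OF z, of A] component_eq[OF y] by simp
  qed (use component_self assms(3) in simp)
qed (rule component_mono[OF assms(1)])

lemma extend_to_same_components:
  assumes "A \<subseteq> B" "B \<subseteq> E"
  shows "\<exists>A'. A \<subseteq> A' \<and> A' \<subseteq> B \<and> (\<forall>v\<in>V. component A' v = component B v)
    \<and> card A' + num_components B \<le> card A + num_components A"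
  using assms
proof (induction "card (B - A)" arbitrary: A rule: less_induct)
  case less
  show ?case
  proof (cases "\<exists>e\<in>B - A. \<exists>a b. ends e = {a, b} \<and> component A a \<noteq> component A b")
    case False
    then have "component A a = component A b" if "e \<in> B - A" "ends e = {a, b}" for e a b
      using that by blast
    then have same: "component A v = component B v" if "v \<in> V" for v
      using component_eq_if_no_crossing[OF less.prems that] by simp
    then have "num_components A = num_components B"
      by (rule num_components_cong)
    then show ?thesis
      using less.prems(1) same by (intro exI[of _ A]) simp
  next
    case True
    then obtain e a b where e: "e \<in> B - A" "ends e = {a, b}" "component A a \<noteq> component A b"
      by blast
    have A: "A \<subseteq> E" and eE: "e \<in> E"
      using less.prems e(1) by auto
    have merge: "num_components (insert e A) + 1 = num_components A"
      using num_components_insert[OF A eE e(2)] e(3) by simp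
    have "card (insert e A) = card A + 1"
      using e(1) finite_subset[OF A finite_E] by simp
    have "card (B - insert e A) < card (B - A)"
      using e(1) finite_subset[OF less.prems(2) finite_E] by (intro psubset_card_mono) auto
    moreover have "insert e A \<subseteq> B"
      using e(1) less.prems(1) by auto
    ultimately have "\<exists>A'. insert e A \<subseteq> A' \<and> A' \<subseteq> B \<and> (\<forall>v\<in>V. component A' v = component B v)
        \<and> card A' + num_components B \<le> card (insert e A) + num_components (insert e A)"
      using less.prems(2) by (rule less.hyps)
    then obtain A' where A': "insert e A \<subseteq> A'" "A' \<subseteq> B"
        "\<forall>v\<in>V. component A' v = component B v"
        "card A' + num_components B \<le> card (insert e A) + num_components (insert e A)"
      by (elim exE conjE)
    then have "card A' + num_components B \<le> card A + num_components A"
      using merge \<open>card (insert e A) = card A + 1\<close> by linarith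
    then show ?thesis
      using A' by (intro exI[of _ A']) blast
  qed
qed

lemma component_closed:
  assumes "K \<in> components A" "A \<subseteq> E" "(u, v) \<in> adj ends A" "u \<in> K"
  shows "v \<in> K"
proof -
  have "K = component A u"
    using components_eq_component assms(1,4) by blast
  moreover have "v \<in> V"
    using adj_in_V[OF assms(2,3)] by simp
  ultimately show ?thesis
    using assms(3) unfolding component_def by auto
qed

lemma edge_not_in_complete_cut_component:
  assumes "K \<in> components A" "A \<subseteq> E" "e \<in> A"
  shows "e \<notin> complete_cut E ends K"
proof -
  obtain a b where ab: "ends e = {a, b}" "a \<noteq> b"
    using edge_ends assms(2,3) by blast
  then have "(a, b) \<in> adj ends A" "(b, a) \<in> adj ends A"
    using assms(3) unfolding adj_def by auto
  then have "a \<in> K \<longleftrightarrow> b \<in> K"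
    using component_closed[OF assms(1,2)] by blast
  then have "card (ends e \<inter> K) \<noteq> 1"
    using ab by (cases "a \<in> K") (auto simp: card_insert_if)
  then show ?thesis
    unfolding complete_cut_def by simp
qed

lemma component_side:
  assumes "\<forall>e\<in>A. card (ends e \<inter> X) \<noteq> 1" "u \<in> component A v"
  shows "u \<in> X \<longleftrightarrow> v \<in> X"
proof -
  have "component A v \<subseteq> {z. z \<in> X \<longleftrightarrow> v \<in> X}"
  proof (rule component_subset_closed)
    fix y z assume y: "y \<in> {z. z \<in> X \<longleftrightarrow> v \<in> X}" and "(y, z) \<in> adj ends A"
    then obtain e where "e \<in> A" "ends e = {y, z}"
      unfolding adj_def by auto
    then have card_ne: "card ({y, z} \<inter> X) \<noteq> 1"
      using assms(1) by auto
    have "y \<in> X \<longleftrightarrow> z \<in> X"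
    proof (rule ccontr)
      assume "\<not> (y \<in> X \<longleftrightarrow> z \<in> X)"
      then have "{y, z} \<inter> X = {y} \<or> {y, z} \<inter> X = {z}"
        by auto
      then show False
        using card_ne by auto
    qed
    then show "z \<in> {z. z \<in> X \<longleftrightarrow> v \<in> X}"
      using y by simp
  qed simp
  then show ?thesis
    using assms(2) by blast
qed

lemma image_split_components:
  "(\<lambda>v. if v \<in> X then component B v \<inter> X else component B v - X) ` V
    = (\<lambda>Y. Y \<inter> X) ` {Y\<in>components B. Y \<inter> X \<noteq> {}} \<union> (\<lambda>Y. Y - X) ` {Y\<in>components B. Y - X \<noteq> {}}"
  (is "?piece ` V = ?In \<union> ?Out")
proof (intro equalityI subsetI)
  fix P assume "P \<in> ?piece ` V"
  then obtain v where v: "v \<in> V" "P = ?piece v"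
    by blast
  have Y: "component B v \<in> components B" "v \<in> component B v"
    using component_in_components[OF v(1)] component_self[OF v(1)] by simp_all
  show "P \<in> ?In \<union> ?Out"
  proof (cases "v \<in> X")
    case True
    then have "component B v \<in> {Y\<in>components B. Y \<inter> X \<noteq> {}}" "P = component B v \<inter> X"
      using Y v(2) by auto
    then show ?thesis
      by blast
  next
    case False
    then have "component B v \<in> {Y\<in>components B. Y - X \<noteq> {}}" "P = component B v - X"
      using Y v(2) by auto
    then show ?thesis
      by blast
  qed
next
  fix P assume "P \<in> ?In \<union> ?Out"
  then obtain Y v where Y: "Y \<in> components B" "v \<in> Y" and P: "P = (if v \<in> X then Y \<inter> X else Y - X)"
  proof (elim UnE imageE CollectE conjE)
    fix Y assume "Y \<in> components B" "Y \<inter> X \<noteq> {}" "P = Y \<inter> X"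
    moreover obtain v where "v \<in> Y \<inter> X"
      using \<open>Y \<inter> X \<noteq> {}\<close> by blast
    ultimately show thesis
      using that[of Y v] by simp
  next
    fix Y assume "Y \<in> components B" "Y - X \<noteq> {}" "P = Y - X"
    moreover obtain v where "v \<in> Y - X"
      using \<open>Y - X \<noteq> {}\<close> by blast
    ultimately show thesis
      using that[of Y v] by simp
  qed
  have "v \<in> V" "Y = component B v"
    using components_subset[OF Y(1)] Y components_eq_component by auto
  then show "P \<in> ?piece ` V"
    using P by simp
qed

lemma num_components_split:
  assumes "A \<subseteq> B" and no_cut: "\<forall>e\<in>A. card (ends e \<inter> X) \<noteq> 1"
  shows "card (components B) + card {Y\<in>components B. splits X Y} \<le> num_components A"
proof -
  define piece where "piece v = (if v \<in> X then component B v \<inter> X else component B v - X)" for v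
  have "card (piece ` V) = card (components B) + card {Y\<in>components B. splits X Y}"
    unfolding piece_def image_split_components
    using card_refine_partition[OF finite_components components_nonempty components_disjoint] .
  moreover have "card (piece ` V) \<le> card (component A ` V)"
  proof (rule card_image_le_if_factors[OF finite_V])
    fix u v assume "u \<in> V" "v \<in> V" "component A u = component A v"
    then have "u \<in> component A v"
      using component_self by metis
    then have "component B u = component B v" "u \<in> X \<longleftrightarrow> v \<in> X"
      using component_eq component_mono[OF assms(1)] component_side[OF no_cut] by blast+
    then show "piece u = piece v"
      unfolding piece_def by simp
  qed
  ultimately show ?thesis
    unfolding num_components_def components_def[of A] by simp
qed

end

section \<open>The MST weight as an integral over weight thresholds\<close>

lemma exists_spanning_tree_subset:
  assumes "finite A" "connected_graph V ends A" "A \<subseteq> H"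
  shows "\<exists>T. T \<subseteq> A \<and> spanning_tree V ends H T"
proof -
  obtain T where T: "T \<subseteq> A" "connected_graph V ends T"
    and least: "\<And>T'. T' \<subseteq> A \<Longrightarrow> connected_graph V ends T' \<Longrightarrow> card T \<le> card T'"
    using ex_has_least_nat[of "\<lambda>T. T \<subseteq> A \<and> connected_graph V ends T" A card] assms(2) by blast
  have "\<not> connected_graph V ends (T - {e})" if "e \<in> T" for e
  proof
    assume "connected_graph V ends (T - {e})"
    then have "card T \<le> card (T - {e})"
      using least T(1) by blast
    moreover have "card (T - {e}) < card T"
      using card_Diff1_less[OF finite_subset[OF T(1) assms(1)] that] .
    ultimately show False
      by simp
  qed
  then show ?thesis
    using T assms(3) unfolding spanning_tree_def by blast
qed

locale weighted_multigraph = multigraph V E ends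
  for V :: "'v set" and E :: "'e set" and ends :: "'e \<Rightarrow> 'v set" +
  fixes w :: "'e \<Rightarrow> real"
  assumes weights_nonneg: "\<forall>e\<in>E. w e \<ge> 0"
    and V_nonempty: "V \<noteq> {}"
begin

definition levels :: "real list" where
  "levels = sorted_list_of_set (insert 0 (w ` E))"

definition num_levels :: nat where
  "num_levels = length levels"

text \<open>Level \<open>num_levels\<close> is a sentinel above every weight.\<close>

definition level :: "nat \<Rightarrow> real" where
  "level l = (if l < num_levels then levels ! l else levels ! (num_levels - 1) + 1)"

definition gap :: "nat \<Rightarrow> real" where
  "gap l = level l - level (l - 1)"

definition below :: "'e set \<Rightarrow> real \<Rightarrow> 'e set" where
  "below H W = {e\<in>H. w e < W}"

definition component_integral :: "'e set \<Rightarrow> real" where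
  "component_integral H = (\<Sum>l\<in>{1..<num_levels}. gap l * (real (num_components (below H (level l))) - 1))"

lemma set_levels: "set levels = insert 0 (w ` E)"
  unfolding levels_def using finite_E by (intro set_sorted_list_of_set) simp

lemma num_levels_pos: "num_levels \<ge> 1"
  using set_levels unfolding num_levels_def by (cases levels) auto

lemma level_less:
  assumes "i < j" "j \<le> num_levels"
  shows "level i < level j"
proof -
  have sorted: "levels ! i < levels ! j" if "i < j" "j < num_levels" for i j
    using sorted_wrt_nth_less[OF strict_sorted_list_of_set] that
    unfolding levels_def num_levels_def by blast
  show ?thesis
  proof (cases "j < num_levels")
    case True
    then show ?thesis
      using sorted assms unfolding level_def by auto
  next
    case False
    then have "j = num_levels"
      using assms by simp
    moreover have "i < num_levels - 1 \<or> i = num_levels - 1"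
      using assms \<open>j = num_levels\<close> by linarith
    then have "levels ! i \<le> levels ! (num_levels - 1)"
      using sorted[of i "num_levels - 1"] by (auto intro: less_imp_le)
    ultimately show ?thesis
      using assms unfolding level_def by auto
  qed
qed

lemma level_le_iff: "i \<le> num_levels \<Longrightarrow> j \<le> num_levels \<Longrightarrow> level i \<le> level j \<longleftrightarrow> i \<le> j"
  using level_less by (metis leD le_less linorder_le_less_linear)

lemma level_mono: "i \<le> j \<Longrightarrow> j \<le> num_levels \<Longrightarrow> level i \<le> level j"
  using level_le_iff by simp

lemma gap_nonneg: "1 \<le> l \<Longrightarrow> l \<le> num_levels \<Longrightarrow> gap l \<ge> 0"
  unfolding gap_def using level_mono[of "l - 1" l] by simp

lemma weight_is_level: "e \<in> E \<Longrightarrow> \<exists>q<num_levels. w e = level q"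
  using set_levels unfolding level_def num_levels_def by (metis in_set_conv_nth insertI2 imageI)

lemma level_0: "level 0 = 0"
proof -
  obtain q where q: "q < num_levels" "level q = 0"
    using set_levels unfolding level_def num_levels_def by (metis in_set_conv_nth insertI1)
  have "levels ! 0 \<in> set levels"
    using num_levels_pos unfolding num_levels_def by (intro nth_mem) linarith
  then have "level 0 \<ge> 0"
    using set_levels weights_nonneg num_levels_pos unfolding level_def by auto
  moreover have "level 0 \<le> level q"
    using level_mono q(1) by simp
  ultimately show ?thesis
    using q(2) by simp
qed

lemma weight_less_top: "e \<in> E \<Longrightarrow> w e < level num_levels"
  using weight_is_level level_less by fastforce

lemma below_subset: "below H W \<subseteq> H"
  unfolding below_def by auto

lemma below_mono: "W \<le> W' \<Longrightarrow> H \<subseteq> H' \<Longrightarrow> below H W \<subseteq> below H' W'"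
  unfolding below_def by auto

lemma below_top: "H \<subseteq> E \<Longrightarrow> below H (level num_levels) = H"
  unfolding below_def using weight_less_top by auto

lemma below_bottom: "H \<subseteq> E \<Longrightarrow> below H (level 0) = {}"
  unfolding below_def level_0 using weights_nonneg by force

lemma weight_eq_sum_gaps:
  assumes "e \<in> E"
  shows "w e = (\<Sum>l\<in>{1..<num_levels}. gap l * (if level l \<le> w e then 1 else 0))"
proof -
  obtain q where q: "q < num_levels" "w e = level q"
    using weight_is_level[OF assms] by blast
  have "(\<Sum>l\<in>{1..<num_levels}. gap l * (if level l \<le> w e then 1 else 0))
      = (\<Sum>l\<in>{1..<num_levels}. if l \<le> q then gap l else 0)"
    using q level_le_iff by (intro sum.cong) auto
  also have "\<dots> = (\<Sum>l\<in>{1..q}. gap l)"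
    using q(1) by (intro sum.mono_neutral_cong_right) auto
  also have "\<dots> = level q - level 0"
    unfolding gap_def by (induction q) simp_all
  finally show ?thesis
    using q(2) level_0 by simp
qed

lemma sum_weight_eq:
  assumes "T \<subseteq> E"
  shows "sum w T = (\<Sum>l\<in>{1..<num_levels}. gap l * real (card {e\<in>T. level l \<le> w e}))"
proof -
  have "sum w T = (\<Sum>e\<in>T. \<Sum>l\<in>{1..<num_levels}. gap l * (if level l \<le> w e then 1 else 0))"
    using weight_eq_sum_gaps assms by (intro sum.cong) auto
  also have "\<dots> = (\<Sum>l\<in>{1..<num_levels}. gap l * (\<Sum>e\<in>T. if level l \<le> w e then 1 else 0))"
    by (subst sum.swap) (simp add: sum_distrib_left)
  also have "\<dots> = (\<Sum>l\<in>{1..<num_levels}. gap l * real (card {e\<in>T. level l \<le> w e}))"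
    using finite_subset[OF assms finite_E] by (simp add: sum.If_cases Int_def)
  finally show ?thesis .
qed

lemma component_integral_le_weight:
  assumes "T \<subseteq> H" "H \<subseteq> E" "connected_graph V ends T"
  shows "component_integral H \<le> sum w T"
proof -
  have TE: "T \<subseteq> E"
    using assms(1,2) by blast
  have "real (num_components (below H (level l))) - 1 \<le> real (card {e\<in>T. level l \<le> w e})" for l
  proof -
    have "below T (level l) \<union> {e\<in>T. level l \<le> w e} = T"
      unfolding below_def by auto
    then have "num_components (below T (level l)) \<le> num_components T + card {e\<in>T. level l \<le> w e}"
      using num_components_le_union[of "{e\<in>T. level l \<le> w e}" "below T (level l)"]
        finite_subset[OF TE finite_E] TE below_subset[of T] by fastforce
    moreover have "num_components T = 1"
      using num_components_connected[OF assms(3) V_nonempty] .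
    moreover have "num_components (below H (level l)) \<le> num_components (below T (level l))"
      using num_components_antimono below_mono[OF order_refl assms(1)] by blast
    ultimately show ?thesis
      by linarith
  qed
  then have "component_integral H \<le> (\<Sum>l\<in>{1..<num_levels}. gap l * real (card {e\<in>T. level l \<le> w e}))"
    unfolding component_integral_def using gap_nonneg by (intro sum_mono mult_left_mono) auto
  then show ?thesis
    using sum_weight_eq[OF TE] by simp
qed

lemma kruskal_forest:
  assumes "H \<subseteq> E" "j \<le> num_levels"
  shows "\<exists>A. A \<subseteq> below H (level j) \<and> (\<forall>v\<in>V. component A v = component (below H (level j)) v)
     \<and> (\<forall>l\<le>j. card {e\<in>A. level l \<le> w e} + num_components (below H (level j))
                 \<le> num_components (below H (level l)))"
  using assms(2)
proof (induction j)
  case 0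
  show ?case
    using below_bottom[OF assms(1)] by (intro exI[of _ "{}"]) simp
next
  case (Suc j)
  let ?Bj = "below H (level j)" and ?B = "below H (level (Suc j))"
  obtain A where A: "A \<subseteq> ?Bj" "\<forall>v\<in>V. component A v = component ?Bj v"
      "\<forall>l\<le>j. card {e\<in>A. level l \<le> w e} + num_components ?Bj \<le> num_components (below H (level l))"
    using Suc by auto
  have "?Bj \<subseteq> ?B"
    using level_mono[of j "Suc j"] Suc.prems by (intro below_mono) auto
  moreover have BE: "?B \<subseteq> E"
    using below_subset assms(1) by blast
  ultimately obtain A' where A': "A \<subseteq> A'" "A' \<subseteq> ?B" "\<forall>v\<in>V. component A' v = component ?B v"
      "card A' + num_components ?B \<le> card A + num_components A"
    using extend_to_same_components[of A ?B] A(1) by blast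
  have kA: "num_components A = num_components ?Bj"
    using A(2) by (intro num_components_cong) simp
  have finA': "finite A'"
    using finite_subset[OF A'(2) finite_subset[OF BE finite_E]] .
  have "card {e\<in>A'. level l \<le> w e} + num_components ?B \<le> num_components (below H (level l))"
    if l: "l \<le> Suc j" for l
  proof (cases "l = Suc j")
    case True
    then have empty: "{e\<in>A'. level l \<le> w e} = {}"
      using A'(2) unfolding below_def by auto
    show ?thesis
      unfolding empty using True by simp
  next
    case False
    have "card {e\<in>A'. level l \<le> w e} + card A \<le> card {e\<in>A. level l \<le> w e} + card A'"
      using finA' A'(1) by (rule card_filter_add_card_le)
    moreover have "card {e\<in>A. level l \<le> w e} + num_components ?Bj \<le> num_components (below H (level l))"
      using A(3) False l by simp
    ultimately show ?thesis
      using A'(4) kA by linarith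
  qed
  then show ?case
    using A'(2,3) by (intro exI[of _ A']) blast
qed

lemma exists_spanning_tree_weight_le:
  assumes "H \<subseteq> E" "connected_graph V ends H"
  shows "\<exists>T. spanning_tree V ends H T \<and> sum w T \<le> component_integral H"
proof -
  obtain A where A: "A \<subseteq> H" "\<forall>v\<in>V. component A v = component H v"
     "\<forall>l\<le>num_levels. card {e\<in>A. level l \<le> w e} + num_components H \<le> num_components (below H (level l))"
    using kruskal_forest[OF assms(1) order_refl] unfolding below_top[OF assms(1)] by blast
  have AE: "A \<subseteq> E"
    using A(1) assms(1) by blast
  have "num_components H = 1"
    using num_components_connected[OF assms(2) V_nonempty] .
  then have "real (card {e\<in>A. level l \<le> w e}) \<le> real (num_components (below H (level l))) - 1"
    if "l \<le> num_levels" for l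
    using A(3) that by fastforce
  then have "sum w A \<le> component_integral H"
    unfolding sum_weight_eq[OF AE] component_integral_def
    using gap_nonneg by (intro sum_mono mult_left_mono) auto
  moreover have "connected_graph V ends A"
    using A(2) assms(2) unfolding connected_graph_iff by simp
  then obtain T where T: "T \<subseteq> A" "spanning_tree V ends H T"
    using exists_spanning_tree_subset[OF finite_subset[OF AE finite_E] _ A(1)] by blast
  moreover have "sum w T \<le> sum w A"
    using T(1) finite_subset[OF AE finite_E] weights_nonneg AE by (intro sum_mono2) auto
  ultimately show ?thesis
    by force
qed

lemma component_integral_le_MST:
  assumes "H \<subseteq> E"
  shows "ereal (component_integral H) \<le> MST V ends w H"
  unfolding MST_def
proof (rule INF_greatest)
  fix T assume "T \<in> {T. spanning_tree V ends H T}"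
  then have "T \<subseteq> H" "connected_graph V ends T"
    unfolding spanning_tree_def by auto
  then show "ereal (component_integral H) \<le> ereal (sum w T)"
    using component_integral_le_weight assms by simp
qed

lemma MST_eq_component_integral:
  assumes "H \<subseteq> E" "connected_graph V ends H"
  shows "MST V ends w H = ereal (component_integral H)"
proof (rule antisym)
  obtain T where T: "spanning_tree V ends H T" "sum w T \<le> component_integral H"
    using exists_spanning_tree_weight_le[OF assms] by blast
  then have "MST V ends w H \<le> ereal (sum w T)"
    unfolding MST_def by (intro INF_lower) simp
  then show "MST V ends w H \<le> ereal (component_integral H)"
    using T(2) by (simp add: order_trans)
qed (rule component_integral_le_MST[OF assms(1)])

end

section \<open>Light components and the cost of their cuts\<close>

locale mst_interdiction = weighted_multigraph V E ends w
  for V :: "'v set" and E :: "'e set" and ends :: "'e \<Rightarrow> 'v set" and w :: "'e \<Rightarrow> real" +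
  fixes F :: "'e set" and c :: "'e \<Rightarrow> real"
  assumes F_subset: "F \<subseteq> E"
    and connected_E: "connected_graph V ends E"
    and connected_E_minus_F: "connected_graph V ends (E - F)"
    and costs_nonneg: "\<forall>e\<in>E. c e \<ge> 0"
begin

abbreviation residual :: "nat \<Rightarrow> 'e set" where
  "residual i \<equiv> below (E - F) (level i)"

abbreviation residual_components :: "nat \<Rightarrow> 'v set set" where
  "residual_components i \<equiv> components (residual i)"

text \<open>Since the heavy child is a largest one, the component of a vertex at least doubles in size
  from a level where it is light to the next level.\<close>

definition heavy_child :: "nat \<Rightarrow> 'v set \<Rightarrow> 'v set" where
  "heavy_child i Z = (SOME X. X \<in> residual_components i \<and> X \<subseteq> Z
      \<and> (\<forall>X'\<in>residual_components i. X' \<subseteq> Z \<longrightarrow> card X' \<le> card X))"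

definition light :: "nat \<Rightarrow> 'v set set" where
  "light i = residual_components i - heavy_child i ` residual_components (Suc i)"

definition light_pairs :: "(nat \<times> 'v set) set" where
  "light_pairs = Sigma {..<num_levels} light"

definition light_cut :: "nat \<times> 'v set \<Rightarrow> 'e set" where
  "light_cut p = partial_cut E ends w (snd p) (level (fst p))"

lemma residual_mono: "i \<le> j \<Longrightarrow> j \<le> num_levels \<Longrightarrow> residual i \<subseteq> residual j"
  using level_mono by (intro below_mono) auto

lemma component_residual_Suc:
  assumes "i < num_levels" "v \<in> V"
  shows "component (residual i) v \<subseteq> component (residual (Suc i)) v"
  using assms by (intro component_mono residual_mono) auto

lemma heavy_child:
  assumes "Z \<in> residual_components (Suc i)" "i < num_levels"
  shows "heavy_child i Z \<in> residual_components i" "heavy_child i Z \<subseteq> Z"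
    "\<And>X. X \<in> residual_components i \<Longrightarrow> X \<subseteq> Z \<Longrightarrow> card X \<le> card (heavy_child i Z)"
proof -
  let ?S = "{X\<in>residual_components i. X \<subseteq> Z}"
  obtain v where v: "v \<in> V" "Z = component (residual (Suc i)) v"
    using assms(1) unfolding components_def by blast
  have "component (residual i) v \<in> ?S"
    using component_in_components[OF v(1)] component_residual_Suc[OF assms(2) v(1)] v(2) by simp
  then have "card ` ?S \<noteq> {}"
    by blast
  moreover have fin: "finite (card ` ?S)"
    using finite_components by simp
  ultimately have "Max (card ` ?S) \<in> card ` ?S"
    by (rule Max_in[rotated])
  then obtain X where X: "X \<in> ?S" "card X = Max (card ` ?S)"
    by (elim imageE) simp
  then have "X \<in> residual_components i \<and> X \<subseteq> Z
      \<and> (\<forall>X'\<in>residual_components i. X' \<subseteq> Z \<longrightarrow> card X' \<le> card X)"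
    using Max_ge[OF fin] by simp
  then have "heavy_child i Z \<in> residual_components i \<and> heavy_child i Z \<subseteq> Z
      \<and> (\<forall>X'\<in>residual_components i. X' \<subseteq> Z \<longrightarrow> card X' \<le> card (heavy_child i Z))"
    unfolding heavy_child_def by (rule someI)
  then show "heavy_child i Z \<in> residual_components i" "heavy_child i Z \<subseteq> Z"
    "\<And>X. X \<in> residual_components i \<Longrightarrow> X \<subseteq> Z \<Longrightarrow> card X \<le> card (heavy_child i Z)"
    by simp_all
qed

lemma inj_on_heavy_child:
  assumes "i < num_levels"
  shows "inj_on (heavy_child i) (residual_components (Suc i))"
proof
  fix Z1 Z2
  assume Z: "Z1 \<in> residual_components (Suc i)" "Z2 \<in> residual_components (Suc i)"
    and eq: "heavy_child i Z1 = heavy_child i Z2"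
  have "heavy_child i Z1 \<noteq> {}"
    using heavy_child(1)[OF Z(1) assms] components_nonempty by blast
  moreover have "heavy_child i Z1 \<subseteq> Z1 \<inter> Z2"
    using heavy_child(2)[OF Z(1) assms] heavy_child(2)[OF Z(2) assms] eq by blast
  ultimately show "Z1 = Z2"
    using components_disjoint Z by blast
qed

lemma card_light:
  assumes "i < num_levels"
  shows "card (light i) + card (residual_components (Suc i)) = card (residual_components i)"
proof -
  have sub: "heavy_child i ` residual_components (Suc i) \<subseteq> residual_components i"
    using heavy_child(1)[OF _ assms] by blast
  have "card (heavy_child i ` residual_components (Suc i)) = card (residual_components (Suc i))"
    using card_image[OF inj_on_heavy_child[OF assms]] .
  moreover have "card (light i) = card (residual_components i) - card (heavy_child i ` residual_components (Suc i))"
    unfolding light_def using card_Diff_subset[OF finite_subset[OF sub finite_components] sub] .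
  moreover have "card (heavy_child i ` residual_components (Suc i)) \<le> card (residual_components i)"
    using card_mono[OF finite_components sub] .
  ultimately show ?thesis
    by linarith
qed

lemma finite_light_pairs: "finite light_pairs"
  unfolding light_pairs_def light_def using finite_components by auto

lemma card_light_pairs: "card light_pairs + 1 = card V"
proof -
  have "(\<Sum>i<j. card (light i)) + card (residual_components j) = card (residual_components 0)"
    if "j \<le> num_levels" for j
    using that
  proof (induction j)
    case (Suc j)
    then show ?case
      using card_light[of j] by simp
  qed simp
  then have "(\<Sum>i<num_levels. card (light i)) + card (residual_components num_levels) = card V"
    using num_components_empty below_bottom[of "E - F"] unfolding num_components_def by auto
  moreover have "residual_components num_levels = {V}"
    using components_connected[OF connected_E_minus_F V_nonempty] below_top[of "E - F"] by auto
  moreover have "card light_pairs = (\<Sum>i<num_levels. card (light i))"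
    unfolding light_pairs_def light_def using finite_components by (subst card_SigmaI) auto
  ultimately show ?thesis
    by simp
qed

lemma light_proper:
  assumes "i < num_levels" "X \<in> light i"
  shows "X \<noteq> {}" "X \<subset> V"
proof -
  have X: "X \<in> residual_components i"
    using assms(2) unfolding light_def by blast
  then show "X \<noteq> {}"
    using components_nonempty by blast
  then obtain v where v: "v \<in> X"
    by blast
  let ?Z = "component (residual (Suc i)) v"
  have vV: "v \<in> V"
    using X v components_subset by blast
  have Z: "?Z \<in> residual_components (Suc i)"
    using component_in_components[OF vV] .
  have H: "heavy_child i ?Z \<in> residual_components i"
    using heavy_child(1)[OF Z assms(1)] .
  have "heavy_child i ?Z \<noteq> X"
    using assms(2) Z unfolding light_def by blast
  then have "heavy_child i ?Z \<inter> X = {}"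
    using components_disjoint H X by blast
  moreover have "heavy_child i ?Z \<noteq> {}" "heavy_child i ?Z \<subseteq> V" "X \<subseteq> V"
    using H X components_nonempty components_subset by auto
  ultimately show "X \<subset> V"
    by blast
qed

lemma partial_cut_residual_subset:
  assumes "X \<in> residual_components i"
  shows "partial_cut E ends w X (level i) \<subseteq> F \<inter> complete_cut E ends X"
proof
  fix e assume e: "e \<in> partial_cut E ends w X (level i)"
  have "e \<notin> residual i"
    using edge_not_in_complete_cut_component[OF assms] below_subset e
    unfolding partial_cut_def by blast
  then show "e \<in> F \<inter> complete_cut E ends X"
    using e unfolding partial_cut_def complete_cut_def below_def by auto
qed

lemma light_doubles:
  assumes "i < num_levels" "v \<in> V" "component (residual i) v \<in> light i"
  shows "2 * card (component (residual i) v) \<le> card (component (residual (Suc i)) v)"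
proof -
  let ?X = "component (residual i) v" and ?Z = "component (residual (Suc i)) v"
  have X: "?X \<in> residual_components i" "?X \<subseteq> ?Z"
    using component_in_components[OF assms(2)] component_residual_Suc[OF assms(1,2)] by simp_all
  have Z: "?Z \<in> residual_components (Suc i)"
    using component_in_components[OF assms(2)] .
  note H = heavy_child[OF Z assms(1)]
  have "heavy_child i ?Z \<noteq> ?X"
    using assms(3) Z unfolding light_def by blast
  then have "heavy_child i ?Z \<inter> ?X = {}"
    using components_disjoint H(1) X(1) by blast
  then have "card (heavy_child i ?Z \<union> ?X) = card (heavy_child i ?Z) + card ?X"
    using finite_subset[OF H(2) finite_component] finite_component by (simp add: card_Un_disjoint)
  moreover have "card (heavy_child i ?Z \<union> ?X) \<le> card ?Z"
    using H(2) X(2) finite_component by (intro card_mono) auto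
  moreover have "card ?X \<le> card (heavy_child i ?Z)"
    by (rule H(3)[OF X])
  ultimately show ?thesis
    by linarith
qed

lemma card_component_light_levels:
  assumes "v \<in> V" "j \<le> num_levels"
  shows "card (component (residual j) v) * 2 ^ card {i\<in>{j..<num_levels}. component (residual i) v \<in> light i}
    \<le> card V"
  using assms(2)
proof (induction j rule: inc_induct)
  case base
  show ?case
    using card_mono[OF finite_V component_subset] by simp
next
  case (step i)
  let ?L = "\<lambda>j. {i\<in>{j..<num_levels}. component (residual i) v \<in> light i}"
  have ivl: "{i..<num_levels} = insert i {Suc i..<num_levels}"
    using step.hyps(2) by auto
  show ?case
  proof (cases "component (residual i) v \<in> light i")
    case True
    then have "?L i = insert i (?L (Suc i))"
      unfolding ivl by auto
    then have "card (?L i) = Suc (card (?L (Suc i)))"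
      by simp
    then have "card (component (residual i) v) * 2 ^ card (?L i)
        = (2 * card (component (residual i) v)) * 2 ^ card (?L (Suc i))"
      by simp
    also have "\<dots> \<le> card (component (residual (Suc i)) v) * 2 ^ card (?L (Suc i))"
      using light_doubles[OF _ assms(1) True] step.hyps(2) by simp
    finally show ?thesis
      using step.IH by linarith
  next
    case False
    then have "?L i = ?L (Suc i)"
      unfolding ivl by auto
    moreover have "card (component (residual i) v) \<le> card (component (residual (Suc i)) v)"
      using component_residual_Suc[OF _ assms(1)] step.hyps(2) finite_component
      by (intro card_mono) auto
    ultimately have "card (component (residual i) v) * 2 ^ card (?L i)
        \<le> card (component (residual (Suc i)) v) * 2 ^ card (?L (Suc i))"
      by simp
    then show ?thesis
      using step.IH by linarith
  qed
qed

lemma card_light_levels_le_log: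
  assumes "v \<in> V"
  shows "real (card {i\<in>{..<num_levels}. component (residual i) v \<in> light i}) \<le> log 2 (card V)"
proof -
  let ?k = "card {i\<in>{0..<num_levels}. component (residual i) v \<in> light i}"
  have "component (residual 0) v \<noteq> {}"
    using component_self[OF assms] by blast
  then have "1 * 2 ^ ?k \<le> card (component (residual 0) v) * 2 ^ ?k"
    using finite_component by (intro mult_le_mono1) (simp add: Suc_le_eq card_gt_0_iff)
  then have "2 ^ ?k \<le> card V"
    using card_component_light_levels[OF assms le0] by linarith
  then show ?thesis
    unfolding atLeast0LessThan by (rule le_log2_of_power)
qed

lemma card_light_pairs_containing_le_log:
  assumes "v \<in> V"
  shows "real (card {p\<in>light_pairs. v \<in> snd p}) \<le> log 2 (card V)"
proof -
  have "{p\<in>light_pairs. v \<in> snd p}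
      \<subseteq> (\<lambda>i. (i, component (residual i) v)) ` {i\<in>{..<num_levels}. component (residual i) v \<in> light i}"
  proof
    fix p assume p: "p \<in> {p\<in>light_pairs. v \<in> snd p}"
    then obtain i X where iX: "p = (i, X)" "i < num_levels" "X \<in> light i" "v \<in> X"
      unfolding light_pairs_def by (cases p) auto
    then have "X = component (residual i) v"
      using components_eq_component unfolding light_def by blast
    then show "p \<in> (\<lambda>i. (i, component (residual i) v)) ` {i\<in>{..<num_levels}. component (residual i) v \<in> light i}"
      using iX by auto
  qed
  then have "card {p\<in>light_pairs. v \<in> snd p}
      \<le> card ((\<lambda>i. (i, component (residual i) v)) ` {i\<in>{..<num_levels}. component (residual i) v \<in> light i})"
    by (intro card_mono) simp_all
  also have "\<dots> \<le> card {i\<in>{..<num_levels}. component (residual i) v \<in> light i}"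
    by (intro card_image_le) simp
  finally show ?thesis
    using card_light_levels_le_log[OF assms] by linarith
qed

lemma card_light_pairs_cutting_le:
  assumes "e \<in> E"
  shows "real (card {p\<in>light_pairs. e \<in> complete_cut E ends (snd p)}) \<le> 2 * log 2 (card V)"
proof -
  obtain a b where ab: "ends e = {a, b}" "a \<in> V" "b \<in> V"
    using edge_ends[OF assms] by blast
  have "{p\<in>light_pairs. e \<in> complete_cut E ends (snd p)}
      \<subseteq> {p\<in>light_pairs. a \<in> snd p} \<union> {p\<in>light_pairs. b \<in> snd p}"
  proof
    fix p assume p: "p \<in> {p\<in>light_pairs. e \<in> complete_cut E ends (snd p)}"
    then have "card (ends e \<inter> snd p) = 1"
      unfolding complete_cut_def by simp
    then have "ends e \<inter> snd p \<noteq> {}"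
      by (intro notI) simp
    then show "p \<in> {p\<in>light_pairs. a \<in> snd p} \<union> {p\<in>light_pairs. b \<in> snd p}"
      using p ab(1) by auto
  qed
  then have "card {p\<in>light_pairs. e \<in> complete_cut E ends (snd p)}
      \<le> card ({p\<in>light_pairs. a \<in> snd p} \<union> {p\<in>light_pairs. b \<in> snd p})"
    using finite_light_pairs by (intro card_mono) simp_all
  also have "\<dots> \<le> card {p\<in>light_pairs. a \<in> snd p} + card {p\<in>light_pairs. b \<in> snd p}"
    by (rule card_Un_le)
  finally show ?thesis
    using card_light_pairs_containing_le_log[OF ab(2)] card_light_pairs_containing_le_log[OF ab(3)]
    by linarith
qed

lemma sum_cost_light_cuts:
  "(\<Sum>p\<in>light_pairs. cost c (light_cut p)) \<le> 2 * cost c F * log 2 (card V)"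
proof -
  have finF: "finite F"
    using finite_subset[OF F_subset finite_E] .
  let ?cut = "\<lambda>p e. e \<in> complete_cut E ends (snd p)"
  have "cost c (light_cut p) \<le> (\<Sum>e\<in>{e\<in>F. ?cut p e}. c e)" if p: "p \<in> light_pairs" for p
  proof -
    have "snd p \<in> residual_components (fst p)"
      using p unfolding light_pairs_def light_def by auto
    then have "light_cut p \<subseteq> {e\<in>F. ?cut p e}"
      unfolding light_cut_def using partial_cut_residual_subset by blast
    then show ?thesis
      unfolding cost_def using finF costs_nonneg F_subset by (intro sum_mono2) auto
  qed
  then have "(\<Sum>p\<in>light_pairs. cost c (light_cut p)) \<le> (\<Sum>p\<in>light_pairs. \<Sum>e\<in>{e\<in>F. ?cut p e}. c e)"
    by (rule sum_mono)
  also have "\<dots> = (\<Sum>e\<in>F. \<Sum>p\<in>{p\<in>light_pairs. ?cut p e}. c e)"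
    using finite_light_pairs finF by (rule sum.swap_restrict)
  also have "\<dots> = (\<Sum>e\<in>F. c e * real (card {p\<in>light_pairs. ?cut p e}))"
    by (simp add: mult.commute)
  also have "\<dots> \<le> (\<Sum>e\<in>F. c e * (2 * log 2 (card V)))"
    using card_light_pairs_cutting_le costs_nonneg F_subset by (intro sum_mono mult_left_mono) auto
  also have "\<dots> = 2 * cost c F * log 2 (card V)"
    unfolding cost_def sum_distrib_right[symmetric] by simp
  finally show ?thesis .
qed

subsection \<open>Profit of the light cuts\<close>

abbreviation full_components :: "nat \<Rightarrow> 'v set set" where
  "full_components l \<equiv> components (below E (level l))"

definition num_meeting :: "nat \<Rightarrow> 'v set \<Rightarrow> nat" where
  "num_meeting i Y = card {X\<in>residual_components i. X \<inter> Y \<noteq> {}}"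

lemma num_meeting_le:
  assumes "i < num_levels"
  shows "num_meeting i Y \<le> card {X\<in>light i. X \<inter> Y \<noteq> {}} + num_meeting (Suc i) Y"
proof -
  let ?M = "\<lambda>i. {X\<in>residual_components i. X \<inter> Y \<noteq> {}}"
  have "?M i \<subseteq> {X\<in>light i. X \<inter> Y \<noteq> {}} \<union> heavy_child i ` ?M (Suc i)"
  proof
    fix X assume X: "X \<in> ?M i"
    show "X \<in> {X\<in>light i. X \<inter> Y \<noteq> {}} \<union> heavy_child i ` ?M (Suc i)"
    proof (cases "X \<in> light i")
      case False
      then obtain Z where Z: "Z \<in> residual_components (Suc i)" "X = heavy_child i Z"
        using X unfolding light_def by auto
      then have "Z \<in> ?M (Suc i)"
        using X heavy_child(2)[OF Z(1) assms] by auto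
      then show ?thesis
        using Z(2) by blast
    qed (use X in simp)
  qed
  then have "num_meeting i Y \<le> card ({X\<in>light i. X \<inter> Y \<noteq> {}} \<union> heavy_child i ` ?M (Suc i))"
    unfolding num_meeting_def light_def using finite_components by (intro card_mono) auto
  also have "\<dots> \<le> card {X\<in>light i. X \<inter> Y \<noteq> {}} + card (heavy_child i ` ?M (Suc i))"
    by (rule card_Un_le)
  also have "\<dots> \<le> card {X\<in>light i. X \<inter> Y \<noteq> {}} + num_meeting (Suc i) Y"
    unfolding num_meeting_def using finite_components by (simp add: card_image_le)
  finally show ?thesis .
qed

lemma num_meeting_pos:
  assumes "Y \<noteq> {}" "Y \<subseteq> V"
  shows "num_meeting i Y \<ge> 1"
proof -
  obtain v where v: "v \<in> Y"
    using assms(1) by blast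
  then have "component (residual i) v \<in> {X\<in>residual_components i. X \<inter> Y \<noteq> {}}"
    using component_in_components component_self assms(2) by blast
  then have "{X\<in>residual_components i. X \<inter> Y \<noteq> {}} \<noteq> {}"
    by blast
  then show ?thesis
    unfolding num_meeting_def by (simp add: Suc_le_eq card_gt_0_iff finite_components)
qed

lemma splits_if_num_meeting_ge_2:
  assumes "num_meeting i Y \<ge> 2" "X \<in> residual_components i" "X \<inter> Y \<noteq> {}"
  shows "splits X Y"
proof -
  have "Y - X \<noteq> {}"
  proof
    assume "Y - X = {}"
    have "{X'\<in>residual_components i. X' \<inter> Y \<noteq> {}} \<subseteq> {X}"
    proof
      fix X' assume X': "X' \<in> {X'\<in>residual_components i. X' \<inter> Y \<noteq> {}}"
      then have "X' \<inter> X \<noteq> {}"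
        using \<open>Y - X = {}\<close> by blast
      then show "X' \<in> {X}"
        using components_disjoint[of X' _ X] X' assms(2) by blast
    qed
    then have "num_meeting i Y \<le> card {X}"
      unfolding num_meeting_def by (intro card_mono) simp_all
    then show False
      using assms(1) by simp
  qed
  then show ?thesis
    using assms(3) unfolding splits_def by blast
qed

lemma num_meeting_step:
  assumes "i < num_levels" "Y \<noteq> {}" "Y \<subseteq> V"
  shows "real (num_meeting i Y) - real (num_meeting (Suc i) Y) \<le> real (card {X\<in>light i. splits X Y})"
proof (cases "num_meeting i Y \<ge> 2")
  case True
  have "{X\<in>light i. X \<inter> Y \<noteq> {}} \<subseteq> {X\<in>light i. splits X Y}"
    using splits_if_num_meeting_ge_2[OF True] unfolding light_def by blast
  then have "card {X\<in>light i. X \<inter> Y \<noteq> {}} \<le> card {X\<in>light i. splits X Y}"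
    using finite_components unfolding light_def by (intro card_mono) auto
  then show ?thesis
    using num_meeting_le[OF assms(1), of Y] by linarith
next
  case False
  then show ?thesis
    using num_meeting_pos[OF assms(2,3), of "Suc i"] by simp
qed

lemma num_meeting_top:
  assumes "Y \<noteq> {}" "Y \<subseteq> V"
  shows "num_meeting num_levels Y = 1"
proof -
  have "residual_components num_levels = {V}"
    using components_connected[OF connected_E_minus_F V_nonempty] below_top[of "E - F"] by auto
  then have "{X\<in>residual_components num_levels. X \<inter> Y \<noteq> {}} = {V}"
    using assms by auto
  then show ?thesis
    unfolding num_meeting_def by simp
qed

lemma num_meeting_le_sum_splits:
  assumes "l \<le> num_levels" "Y \<noteq> {}" "Y \<subseteq> V"
  shows "real (num_meeting l Y) - 1 \<le> (\<Sum>i\<in>{l..<num_levels}. real (card {X\<in>light i. splits X Y}))"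
proof -
  have "real (num_meeting l Y) - real (num_meeting j Y) \<le> (\<Sum>i\<in>{l..<j}. real (card {X\<in>light i. splits X Y}))"
    if "l \<le> j" "j \<le> num_levels" for j
    using that
  proof (induction j rule: dec_induct)
    case (step j)
    then show ?case
      using num_meeting_step[of j Y] assms(2,3) by simp
  qed simp
  from this[OF assms(1) order_refl] show ?thesis
    using num_meeting_top[OF assms(2,3)] by simp
qed

lemma card_light_pairs_splitting:
  assumes "l \<le> num_levels"
  shows "card {p\<in>light_pairs. l \<le> fst p \<and> splits (snd p) Y}
    = (\<Sum>i\<in>{l..<num_levels}. card {X\<in>light i. splits X Y})"
proof -
  have "{p\<in>light_pairs. l \<le> fst p \<and> splits (snd p) Y} = Sigma {l..<num_levels} (\<lambda>i. {X\<in>light i. splits X Y})"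
    unfolding light_pairs_def by auto
  moreover have "finite {X\<in>light i. splits X Y}" for i
    using finite_components unfolding light_def by simp
  ultimately show ?thesis
    by (simp add: card_SigmaI)
qed

lemma card_residual_components_le:
  "card (residual_components l) \<le> (\<Sum>Y\<in>full_components l. num_meeting l Y)"
proof -
  have "residual_components l \<subseteq> (\<Union>Y\<in>full_components l. {X\<in>residual_components l. X \<inter> Y \<noteq> {}})"
  proof
    fix X assume X: "X \<in> residual_components l"
    then obtain v where v: "v \<in> X" "v \<in> V"
      using components_nonempty components_subset by blast
    then have "component (below E (level l)) v \<in> full_components l" "X \<inter> component (below E (level l)) v \<noteq> {}"
      using component_in_components component_self by blast+
    then show "X \<in> (\<Union>Y\<in>full_components l. {X\<in>residual_components l. X \<inter> Y \<noteq> {}})"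
      using X by blast
  qed
  then have "card (residual_components l)
      \<le> card (\<Union>Y\<in>full_components l. {X\<in>residual_components l. X \<inter> Y \<noteq> {}})"
    using finite_components by (intro card_mono) auto
  also have "\<dots> \<le> (\<Sum>Y\<in>full_components l. num_meeting l Y)"
    unfolding num_meeting_def using finite_components by (rule card_UN_le)
  finally show ?thesis .
qed

lemma num_components_light_cut:
  assumes "p \<in> light_pairs" "l \<le> fst p"
  shows "card (full_components l) + card {Y\<in>full_components l. splits (snd p) Y}
    \<le> num_components (below (E - light_cut p) (level l))"
proof (rule num_components_split)
  show "below (E - light_cut p) (level l) \<subseteq> below E (level l)"
    by (rule below_mono) auto
  have "level l \<le> level (fst p)"
    using assms unfolding light_pairs_def by (intro level_mono) auto
  then show "\<forall>e\<in>below (E - light_cut p) (level l). card (ends e \<inter> snd p) \<noteq> 1"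
    unfolding below_def light_cut_def partial_cut_def complete_cut_def by auto
qed

lemma full_components_le_light_cut:
  "card (full_components l) \<le> num_components (below (E - light_cut p) (level l))"
  unfolding num_components_def[symmetric] by (intro num_components_antimono below_mono) auto

lemma excess_components_le:
  assumes "l \<le> num_levels"
  shows "real (card (residual_components l)) - real (card (full_components l))
    \<le> (\<Sum>p\<in>light_pairs. real (num_components (below (E - light_cut p) (level l)))
                         - real (card (full_components l)))"
proof -
  let ?R = "\<lambda>p Y. l \<le> fst p \<and> splits (snd p) Y"
  have "real (card (residual_components l)) - real (card (full_components l))
      \<le> (\<Sum>Y\<in>full_components l. real (num_meeting l Y) - 1)"
    using card_residual_components_le[of l] by (simp add: sum_subtractf flip: of_nat_sum)
  also have "\<dots> \<le> (\<Sum>Y\<in>full_components l. real (card {p\<in>light_pairs. ?R p Y}))"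
    using num_meeting_le_sum_splits[OF assms] card_light_pairs_splitting[OF assms]
      components_nonempty components_subset
    by (intro sum_mono) (simp flip: of_nat_sum)
  also have "\<dots> = (\<Sum>p\<in>light_pairs. real (card {Y\<in>full_components l. ?R p Y}))"
    using sum_card_swap[OF finite_components finite_light_pairs, of "\<lambda>Y p. ?R p Y"]
    by (simp flip: of_nat_sum)
  also have "\<dots> \<le> (\<Sum>p\<in>light_pairs. real (num_components (below (E - light_cut p) (level l)))
                                       - real (card (full_components l)))"
  proof (rule sum_mono)
    fix p assume p: "p \<in> light_pairs"
    show "real (card {Y\<in>full_components l. ?R p Y})
        \<le> real (num_components (below (E - light_cut p) (level l))) - real (card (full_components l))"
    proof (cases "l \<le> fst p")
      case True
      then have "real (card (full_components l)) + real (card {Y\<in>full_components l. ?R p Y})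
          \<le> real (num_components (below (E - light_cut p) (level l)))"
        using num_components_light_cut[OF p True] by (simp flip: of_nat_add)
      then show ?thesis
        by linarith
    next
      case False
      then show ?thesis
        using full_components_le_light_cut[of l p] by simp
    qed
  qed
  finally show ?thesis .
qed

lemma component_integral_diff:
  "component_integral H - component_integral E
    = (\<Sum>l\<in>{1..<num_levels}. gap l * (real (num_components (below H (level l))) - real (card (full_components l))))"
  unfolding component_integral_def num_components_def
  by (simp add: sum_subtractf[symmetric] algebra_simps)

lemma profit_le_sum_light_cuts:
  "profit V E ends w F \<le> (\<Sum>p\<in>light_pairs. profit V E ends w (light_cut p))"
proof -
  let ?k = "\<lambda>H l. real (num_components (below H (level l))) - real (card (full_components l))"
  have MST_E: "MST V ends w E = ereal (component_integral E)"
    using MST_eq_component_integral[OF order_refl connected_E] .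
  have MST_E_F: "MST V ends w (E - F) = ereal (component_integral (E - F))"
    using MST_eq_component_integral[OF _ connected_E_minus_F] by blast
  have "component_integral (E - F) - component_integral E = (\<Sum>l\<in>{1..<num_levels}. gap l * ?k (E - F) l)"
    by (rule component_integral_diff)
  also have "\<dots> \<le> (\<Sum>l\<in>{1..<num_levels}. gap l * (\<Sum>p\<in>light_pairs. ?k (E - light_cut p) l))"
    using excess_components_le gap_nonneg unfolding num_components_def
    by (intro sum_mono mult_left_mono) auto
  also have "\<dots> = (\<Sum>p\<in>light_pairs. component_integral (E - light_cut p) - component_integral E)"
    unfolding component_integral_diff sum_distrib_left by (rule sum.swap)
  finally have "ereal (component_integral (E - F) - component_integral E)
      \<le> (\<Sum>p\<in>light_pairs. ereal (component_integral (E - light_cut p) - component_integral E))"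
    by (simp add: sum_ereal)
  also have "\<dots> \<le> (\<Sum>p\<in>light_pairs. profit V E ends w (light_cut p))"
  proof (rule sum_mono)
    fix p
    have le: "ereal (component_integral (E - light_cut p)) \<le> MST V ends w (E - light_cut p)"
      by (rule component_integral_le_MST) auto
    show "ereal (component_integral (E - light_cut p) - component_integral E)
        \<le> profit V E ends w (light_cut p)"
      unfolding profit_def MST_E
      using ereal_minus_mono[OF le order_refl, of "ereal (component_integral E)"] by simp
  qed
  finally show ?thesis
    unfolding profit_def MST_E MST_E_F by simp
qed

end

theorem mainTheorem6:
  fixes V :: "'v set" and E :: "'e set" and ends :: "'e \<Rightarrow> 'v set"
    and w c :: "'e \<Rightarrow> real" and F :: "'e set"
  assumes "graph V E ends"
    and "card V \<ge> 2"
    and "connected_graph V ends E"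
    and "\<forall>e\<in>E. w e \<ge> 0"
    and "\<forall>e\<in>E. c e > 0"
    and "F \<subseteq> E"
    and "connected_graph V ends (E - F)"
  shows "\<exists>(t::nat) (S :: nat \<Rightarrow> 'v set) (W :: nat \<Rightarrow> real).
           t \<le> card V
         \<and> (\<forall>i\<in>{1..<t}. S i \<noteq> {} \<and> S i \<subset> V)
         \<and> (\<Sum>i=1..<t. cost c (partial_cut E ends w (S i) (W i)))
              \<le> 2 * cost c F * log 2 (real (card V))
         \<and> (\<Sum>i=1..<t. profit V E ends w (partial_cut E ends w (S i) (W i)))
              \<ge> profit V E ends w F"
proof -
  interpret mst_interdiction V E ends w F c
    using assms by unfold_locales (auto simp: less_imp_le)
  let ?t = "card light_pairs + 1"
  obtain h where h: "bij_betw h {1..<?t} light_pairs"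
    using ex_bij_betw_nat_finite_1[OF finite_light_pairs] by (auto simp: atLeastLessThanSuc_atLeastAtMost)
  define S where "S i = snd (h i)" for i
  define W where "W i = level (fst (h i))" for i
  have cut: "partial_cut E ends w (S i) (W i) = light_cut (h i)" for i
    unfolding S_def W_def light_cut_def ..
  have "?t \<le> card V"
    using card_light_pairs by simp
  moreover have "S i \<noteq> {} \<and> S i \<subset> V" if "i \<in> {1..<?t}" for i
    using bij_betwE[OF h] that light_proper unfolding S_def light_pairs_def by fastforce
  moreover have "(\<Sum>i=1..<?t. cost c (partial_cut E ends w (S i) (W i))) \<le> 2 * cost c F * log 2 (card V)"
    unfolding cut sum.reindex_bij_betw[OF h, of "\<lambda>p. cost c (light_cut p)"] by (rule sum_cost_light_cuts)
  moreover have "(\<Sum>i=1..<?t. profit V E ends w (partial_cut E ends w (S i) (W i))) \<ge> profit V E ends w F"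
    unfolding cut sum.reindex_bij_betw[OF h, of "\<lambda>p. profit V E ends w (light_cut p)"]
    by (rule profit_le_sum_light_cuts)
  ultimately show ?thesis
    by (intro exI[of _ ?t] exI[of _ S] exI[of _ W]) blast
qed

end
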